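(* Suppose $X$ and $Y$ are independent real random variables, where $X$ has a symmetric, unimodal density. Then $\mathrm{MAD}(X)\le\mathrm{MAD}(X+Y)$.
   Context: For a random variable $Z$, $\mathrm{med}(Z)$ denotes its median and the median absolute deviation is $\mathrm{MAD}(Z)=\mathrm{med}\big(|Z-\mathrm{med}(Z)|\big)$. *)

theory Defs
  imports "HOL-Probability.Probability"
begin

text \<open>Median of a real random variable Z on M (convention: the lower median,
  i.e. the smallest t with P(Z \<le> t) \<ge> 1/2).\<close>
definition med :: "'a measure \<Rightarrow> ('a \<Rightarrow> real) \<Rightarrow> real" where
  "med M Z = Inf {t. 1/2 \<le> measure M {\<omega> \<in> space M. Z \<omega> \<le> t}}"

definition MAD :: "'a measure \<Rightarrow> ('a \<Rightarrow> real) \<Rightarrow> real" where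
  "MAD M Z = med M (\<lambda>\<omega>. \<bar>Z \<omega> - med M Z\<bar>)"

definition symmetric_unimodal :: "(real \<Rightarrow> ennreal) \<Rightarrow> real \<Rightarrow> bool" where
  "symmetric_unimodal f c \<longleftrightarrow>
     (\<forall>x. f (c + x) = f (c - x)) \<and>
     (\<forall>x y. x \<le> y \<and> y \<le> c \<longrightarrow> f x \<le> f y) \<and>
     (\<forall>x y. c \<le> x \<and> x \<le> y \<longrightarrow> f y \<le> f x)"

end

theory Submission
  imports Defs
begin

(*
  If X has a density f that is symmetric and unimodal about c, then c is the (lower) median of X,
  and among all windows [a - t, a + t] of a fixed width the centred one, a = c, carries the most
  mass of X: the part of a window lying beyond the centred one, moved back by 2t, lands where f
  is at least as large. Conditioning on the independent Y, for m = med(X + Y) and every t,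
    P(|X + Y - m| <= t) = E[P(|X - (m - Y)| <= t)] <= P(|X - c| <= t),
  so |X + Y - m| is stochastically larger than |X - c|, and the median is monotone in the
  stochastic order: MAD(X) = med |X - c| <= med |X + Y - m| = MAD(X + Y).
*)

lemma symmetric_unimodal_le:
  assumes "symmetric_unimodal f c" "\<bar>x - c\<bar> \<le> \<bar>y - c\<bar>"
  shows "f y \<le> f x"
proof -
  have radial: "f (c + \<bar>z - c\<bar>) = f z" for z
  proof (cases "c \<le> z")
    case False
    have "f (c + (c - z)) = f (c - (c - z))"
      using assms(1) unfolding symmetric_unimodal_def by blast
    with False show ?thesis by simp
  qed simp
  have "f (c + \<bar>y - c\<bar>) \<le> f (c + \<bar>x - c\<bar>)"
    using assms unfolding symmetric_unimodal_def by simp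
  then show ?thesis by (simp only: radial)
qed

lemma med_eqI:
  assumes "1/2 \<le> measure M {\<omega> \<in> space M. Z \<omega> \<le> m}"
    and "\<And>t. t < m \<Longrightarrow> measure M {\<omega> \<in> space M. Z \<omega> \<le> t} < 1/2"
  shows "med M Z = m"
  unfolding med_def using assms by (intro cInf_eq_minimum) (auto simp: not_less[symmetric])

lemma (in prob_space) med_mono:
  assumes [measurable]: "Z \<in> borel_measurable M" "W \<in> borel_measurable M"
    and "\<And>t. prob {\<omega> \<in> space M. W \<omega> \<le> t} \<le> prob {\<omega> \<in> space M. Z \<omega> \<le> t}"
  shows "med M Z \<le> med M W"
proof -
  have cdf_distr: "cdf (distr M borel V) t = prob {\<omega> \<in> space M. V \<omega> \<le> t}"
    if [measurable]: "V \<in> borel_measurable M" for V t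
    unfolding cdf_def by (simp add: measure_distr vimage_def Int_def conj_commute)
  interpret Z: real_distribution "distr M borel Z" by simp
  interpret W: real_distribution "distr M borel W" by simp
  have "eventually (\<lambda>t. cdf (distr M borel W) t > 1/2) at_top"
    using W.cdf_lim_at_top_prob by (rule order_tendstoD) simp
  then obtain t where "1/2 < cdf (distr M borel W) t"
    by (metis eventually_at_top_linorder order_refl)
  then have "1/2 \<le> prob {\<omega> \<in> space M. W \<omega> \<le> t}"
    by (simp add: cdf_distr)
  then have nonempty: "{t. 1/2 \<le> prob {\<omega> \<in> space M. W \<omega> \<le> t}} \<noteq> {}"
    by blast
  have "eventually (\<lambda>t. cdf (distr M borel Z) t < 1/2) at_bot"
    using Z.cdf_lim_at_bot by (rule order_tendstoD) simp
  then obtain b where b: "\<And>t. t \<le> b \<Longrightarrow> prob {\<omega> \<in> space M. Z \<omega> \<le> t} < 1/2"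
    by (auto simp: eventually_at_bot_linorder cdf_distr)
  have "bdd_below {t. 1/2 \<le> prob {\<omega> \<in> space M. Z \<omega> \<le> t}}"
  proof (rule bdd_belowI)
    fix t assume "t \<in> {t. 1/2 \<le> prob {\<omega> \<in> space M. Z \<omega> \<le> t}}"
    then show "b \<le> t"
      using b[of t] by (cases "t \<le> b") auto
  qed
  moreover have "{t. 1/2 \<le> prob {\<omega> \<in> space M. W \<omega> \<le> t}} \<subseteq>
      {t. 1/2 \<le> prob {\<omega> \<in> space M. Z \<omega> \<le> t}}"
    using assms(3) order_trans by blast
  ultimately show ?thesis
    unfolding med_def by (rule cInf_superset_mono[OF nonempty])
qed

lemma (in prob_space) prob_add_indep_le:
  fixes X Y :: "'a \<Rightarrow> 'b::ordered_euclidean_space"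
  assumes indep: "indep_var borel X borel Y" and [measurable]: "A \<in> sets borel"
    and bound: "\<And>y. prob {\<omega> \<in> space M. X \<omega> + y \<in> A} \<le> q"
  shows "prob {\<omega> \<in> space M. X \<omega> + Y \<omega> \<in> A} \<le> q"
proof -
  have [measurable]: "X \<in> borel_measurable M" "Y \<in> borel_measurable M"
    using indep_var_rv1[OF indep] indep_var_rv2[OF indep] by simp_all
  interpret PX: prob_space "distr M borel X"
    by (rule prob_space_distr) simp
  interpret PY: prob_space "distr M borel Y"
    by (rule prob_space_distr) simp
  have slice: "emeasure (distr M borel X) {x. x + y \<in> A} \<le> ennreal q" for y
  proof -
    have "{x. x + y \<in> A} \<in> sets borel"
      by measurable
    then show ?thesis
      using bound[of y]
      by (simp add: emeasure_distr emeasure_eq_measure vimage_def Int_def conj_commute ennreal_leI)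
  qed
  have "emeasure M {\<omega> \<in> space M. X \<omega> + Y \<omega> \<in> A} =
      emeasure (distr M borel (\<lambda>\<omega>. X \<omega> + Y \<omega>)) A"
    by (simp add: emeasure_distr vimage_def Int_def conj_commute)
  also have "\<dots> = emeasure (distr M borel Y \<star> distr M borel X) A"
    using sum_indep_random_variable[OF indep]
      convolution_commutative[of "distr M borel X" "distr M borel Y"]
    by (simp add: PX.finite_measure_axioms PY.finite_measure_axioms)
  also have "\<dots> = (\<integral>\<^sup>+y. emeasure (distr M borel X) {x. x + y \<in> A} \<partial>distr M borel Y)"
    by (rule convolution_emeasure) (simp_all add: PX.finite_measure_axioms PY.finite_measure_axioms)
  also have "\<dots> \<le> (\<integral>\<^sup>+y. ennreal q \<partial>distr M borel Y)"
    by (intro nn_integral_mono slice)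
  also have "\<dots> = ennreal q"
    using PY.emeasure_space_1 by simp
  finally show ?thesis
    using order_trans[OF measure_nonneg bound] by (simp add: emeasure_eq_measure)
qed

locale symmetric_unimodal_density = real_distribution "density lborel f" for f :: "real \<Rightarrow> ennreal" +
  fixes c :: real
  assumes borel_measurable_density [measurable]: "f \<in> borel_measurable borel"
    and symmetric_unimodal: "symmetric_unimodal f c"
begin

lemma emeasure_eq_nn_integral:
  "A \<in> sets borel \<Longrightarrow> emeasure (density lborel f) A = (\<integral>\<^sup>+x. f x * indicator A x \<partial>lborel)"
  by (simp add: emeasure_density)

lemma AE_neq: "AE x in density lborel f. x \<noteq> a"
  using AE_lborel_singleton[of a] by (auto simp: AE_density elim!: eventually_mono)

lemma prob_Ioc_eq_cdf_diff:
  "x \<le> y \<Longrightarrow> prob {x<..y} = cdf (density lborel f) y - cdf (density lborel f) x"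
  by (cases "x < y") (simp_all add: cdf_diff_eq)

lemma prob_Icc_eq_cdf_diff:
  assumes "x \<le> y"
  shows "prob {x..y} = cdf (density lborel f) y - cdf (density lborel f) x"
proof -
  have "prob {x..y} = prob {x<..y}"
    by (rule measure_eq_AE) (use AE_neq[of x] in \<open>auto elim!: eventually_mono\<close>)
  with assms show ?thesis
    by (simp add: prob_Ioc_eq_cdf_diff)
qed

lemma prob_Ioc_shift_le:
  assumes "\<And>x. lo < x \<Longrightarrow> x \<le> hi \<Longrightarrow> f (x + h) \<le> f x"
  shows "prob {lo + h<..hi + h} \<le> prob {lo<..hi}"
proof -
  have "emeasure (density lborel f) {lo + h<..hi + h} =
      (\<integral>\<^sup>+x. f (x + h) * indicator {lo<..hi} x \<partial>lborel)"
    unfolding emeasure_eq_nn_integral[OF greaterThanAtMost_borel]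
    by (subst nn_integral_real_affine[where c=1 and t=h])
      (auto intro!: nn_integral_cong simp: indicator_def add.commute)
  also have "\<dots> \<le> (\<integral>\<^sup>+x. f x * indicator {lo<..hi} x \<partial>lborel)"
    by (intro nn_integral_mono) (simp add: indicator_def assms)
  also have "\<dots> = emeasure (density lborel f) {lo<..hi}"
    by (simp add: emeasure_eq_nn_integral)
  finally show ?thesis
    by (simp add: emeasure_eq_measure)
qed

lemma prob_atMost_center: "prob {..c} = 1/2"
proof -
  have reflect: "f (2 * c - x) = f x" for x
  proof -
    have "f (c + (c - x)) = f (c - (c - x))"
      using symmetric_unimodal unfolding symmetric_unimodal_def by blast
    then show ?thesis
      by (simp add: mult_2 algebra_simps)
  qed
  have "emeasure (density lborel f) {..c} = emeasure (density lborel f) {c..}"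
    unfolding emeasure_eq_nn_integral[OF atMost_borel] emeasure_eq_nn_integral[OF atLeast_borel]
    by (subst nn_integral_real_affine[where c="-1" and t="2 * c"])
      (auto intro!: nn_integral_cong simp: indicator_def reflect)
  also have "\<dots> = emeasure (density lborel f) {c<..}"
    by (rule emeasure_eq_AE) (use AE_neq[of c] in \<open>auto elim!: eventually_mono\<close>)
  finally have "prob {..c} = prob {c<..}"
    by (simp add: emeasure_eq_measure)
  moreover have "{..c} \<union> {c<..} = UNIV"
    by auto
  then have "prob {..c} + prob {c<..} = 1"
    using finite_measure_Union[of "{..c}" "{c<..}"] prob_space by (simp add: disjoint_iff)
  ultimately show ?thesis
    by simp
qed

lemma prob_atMost_less_half:
  assumes "t < c"
  shows "prob {..t} < 1/2"
proof (rule ccontr)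
  assume "\<not> prob {..t} < 1/2"
  then have "prob {t<..c} = 0"
    using prob_Ioc_eq_cdf_diff[of t c] prob_atMost_center cdf_nondecreasing[of t c] assms
    by (simp add: cdf_def)
  then have no_mass: "(\<integral>\<^sup>+x. f x * indicator {t<..c} x \<partial>lborel) = 0"
    using emeasure_eq_nn_integral[of "{t<..c}"] by (simp add: emeasure_eq_measure)
  \<comment> \<open>by unimodality, f left of t is bounded by f at every point of (t, c], where f vanishes a.e.\<close>
  have vanishes: "f y = 0" if "y \<le> t" for y
  proof -
    have "f y * emeasure lborel {t<..c} = (\<integral>\<^sup>+x. f y * indicator {t<..c} x \<partial>lborel)"
      by (rule nn_integral_cmult_indicator[symmetric]) simp
    also have "\<dots> \<le> (\<integral>\<^sup>+x. f x * indicator {t<..c} x \<partial>lborel)"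
      using that by (intro nn_integral_mono)
        (auto simp: indicator_def intro!: symmetric_unimodal_le[OF symmetric_unimodal])
    finally show "f y = 0"
      using no_mass assms by simp
  qed
  have "emeasure (density lborel f) {..t} = 0"
    unfolding emeasure_eq_nn_integral[OF atMost_borel]
    by (intro nn_integral_zero' AE_I2) (auto simp: indicator_def vanishes)
  then show False
    using \<open>\<not> prob {..t} < 1/2\<close> by (simp add: emeasure_eq_measure)
qed

lemma prob_Icc_le_center: "prob {a - t..a + t} \<le> prob {c - t..c + t}"
proof (cases "0 \<le> t")
  case True
  let ?F = "cdf (density lborel f)"
  have "?F (a + t) - ?F (a - t) \<le> ?F (c + t) - ?F (c - t)"
  proof (cases "c \<le> a")
    case True
    have "prob {c - t + 2 * t<..a - t + 2 * t} \<le> prob {c - t<..a - t}"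
      using \<open>0 \<le> t\<close> by (intro prob_Ioc_shift_le symmetric_unimodal_le[OF symmetric_unimodal]) auto
    with True show ?thesis
      by (simp add: prob_Ioc_eq_cdf_diff algebra_simps)
  next
    case False
    have "prob {a + t + - 2 * t<..c + t + - 2 * t} \<le> prob {a + t<..c + t}"
      using \<open>0 \<le> t\<close> by (intro prob_Ioc_shift_le symmetric_unimodal_le[OF symmetric_unimodal]) auto
    with False show ?thesis
      by (simp add: prob_Ioc_eq_cdf_diff algebra_simps)
  qed
  with True show ?thesis
    by (simp add: prob_Icc_eq_cdf_diff)
qed simp

lemma measure_distributed:
  assumes "distributed N lborel X f" "A \<in> sets borel"
  shows "measure N {\<omega> \<in> space N. X \<omega> \<in> A} = prob A"
  using assms distributed_measurable[OF assms(1)]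
  by (simp add: distributed_distr_eq_density[symmetric] measure_distr vimage_def Int_def conj_commute)

lemma med_distributed:
  assumes "distributed N lborel X f"
  shows "med N X = c"
proof (rule med_eqI)
  show "1/2 \<le> measure N {\<omega> \<in> space N. X \<omega> \<le> c}"
    using measure_distributed[OF assms, of "{..c}"] prob_atMost_center by simp
  show "measure N {\<omega> \<in> space N. X \<omega> \<le> t} < 1/2" if "t < c" for t
    using measure_distributed[OF assms, of "{..t}"] prob_atMost_less_half[OF that] by simp
qed

lemma measure_abs_diff_le_distributed:
  assumes "distributed N lborel X f"
  shows "measure N {\<omega> \<in> space N. \<bar>X \<omega> - a\<bar> \<le> t} \<le>
    measure N {\<omega> \<in> space N. \<bar>X \<omega> - c\<bar> \<le> t}"
proof -
  have event:
    "{\<omega> \<in> space N. \<bar>X \<omega> - b\<bar> \<le> t} = {\<omega> \<in> space N. X \<omega> \<in> {b - t..b + t}}" for b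
    by auto
  show ?thesis
    unfolding event measure_distributed[OF assms atLeastAtMost_borel] by (rule prob_Icc_le_center)
qed

end

lemma (in prob_space) symmetric_unimodal_density_distributed:
  assumes "distributed M lborel X f" "symmetric_unimodal f c"
  shows "symmetric_unimodal_density f c"
proof -
  have "prob_space (density lborel f)"
    unfolding distributed_distr_eq_density[OF assms(1), symmetric]
    using distributed_measurable[OF assms(1)] by (rule prob_space_distr)
  with assms show ?thesis
    unfolding symmetric_unimodal_density_def symmetric_unimodal_density_axioms_def
      real_distribution_def real_distribution_axioms_def
    by (simp add: distributed_borel_measurable)
qed

theorem lemma15:
  fixes M :: "'a measure" and X Y :: "'a \<Rightarrow> real"
    and f :: "real \<Rightarrow> ennreal" and c :: real
  assumes "prob_space M"
    and "X \<in> borel_measurable M" and "Y \<in> borel_measurable M"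
    and "prob_space.indep_var M borel X borel Y"
    and "distributed M lborel X f"
    and "symmetric_unimodal f c"
  shows "MAD M X \<le> MAD M (\<lambda>\<omega>. X \<omega> + Y \<omega>)"
proof -
  interpret prob_space M by fact
  interpret D: symmetric_unimodal_density f c
    using assms(5,6) by (rule symmetric_unimodal_density_distributed)
  note [measurable] = assms(2,3)
  define m where "m = med M (\<lambda>\<omega>. X \<omega> + Y \<omega>)"
  have dominated:
    "prob {\<omega> \<in> space M. \<bar>X \<omega> + Y \<omega> - m\<bar> \<le> t} \<le> prob {\<omega> \<in> space M. \<bar>X \<omega> - c\<bar> \<le> t}" for t
  proof -
    let ?window = "{m - t..m + t}"
    have "{\<omega> \<in> space M. X \<omega> + y \<in> ?window} = {\<omega> \<in> space M. \<bar>X \<omega> - (m - y)\<bar> \<le> t}" for y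
      by auto
    then have "prob {\<omega> \<in> space M. X \<omega> + y \<in> ?window} \<le> prob {\<omega> \<in> space M. \<bar>X \<omega> - c\<bar> \<le> t}" for y
      using D.measure_abs_diff_le_distributed[OF assms(5)] by simp
    then have "prob {\<omega> \<in> space M. X \<omega> + Y \<omega> \<in> ?window} \<le> prob {\<omega> \<in> space M. \<bar>X \<omega> - c\<bar> \<le> t}"
      by (rule prob_add_indep_le[OF assms(4) atLeastAtMost_borel])
    moreover have
      "{\<omega> \<in> space M. X \<omega> + Y \<omega> \<in> ?window} = {\<omega> \<in> space M. \<bar>X \<omega> + Y \<omega> - m\<bar> \<le> t}"
      by auto
    ultimately show ?thesis
      by simp
  qed
  have "med M (\<lambda>\<omega>. \<bar>X \<omega> - c\<bar>) \<le> med M (\<lambda>\<omega>. \<bar>X \<omega> + Y \<omega> - m\<bar>)"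
    by (rule med_mono[OF _ _ dominated]; measurable)
  then show ?thesis
    by (simp add: MAD_def D.med_distributed[OF assms(5)] m_def)
qed

end
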